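(* Let $d\ge1$, $x_1<x_2$, $x_0\in[x_1,x_2]$, let $p,q,r_1,\dots,r_d$ be functions on $[x_1,x_2]$, $Ly=(py')'+qy$, and let $u_0$ be a nonvanishing function on $[x_1,x_2]$ with $Lu_0=0$. Then for every $\mathbf n\in\mathbb Z_{\ge0}^d$, $$L\big(u_0X^{(2\mathbf n+\frac1d\mathbf 1)}\big)=(2|\mathbf n|+1)(2|\mathbf n|)\,u_0\sum_{i=1}^d r_i\,X^{(2\mathbf n-2\delta_i+\frac1d\mathbf 1)} .$$
   Context: Notation: $\int f$ denotes $x\mapsto\int_{x_0}^x f(s)\,ds$; $|\mathbf j|=j_1+\cdots+j_d$; $\delta_i$ is the $i$-th standard basis vector; $\mathbf 1=(1,\dots,1)$. Formal powers $X$: indexed by $\mathbf j=\mathbf m+\frac1d\mathbf 1$ with $\mathbf m\in\mathbb Z^d$, so $|\mathbf j|=|\mathbf m|+1$. Call $\mathbf j$ admissible if at most one $m_i$ is odd. Set $X^{(\frac1d\mathbf 1-\delta_i)}\equiv\frac1d$ for $i=1,\dots,d$; $X^{(\mathbf m+\frac1d\mathbf 1)}\equiv0$ if some $m_i<0$ and $\mathbf m\notin\{-\delta_1,\dots,-\delta_d\}$. For admissible $\mathbf j$ with $\mathbf m\ge0$: if $|\mathbf j|$ is even (exactly one $m_i$ odd), $X^{(\mathbf j)}=|\mathbf j|\int r_iu_0^2\,X^{(\mathbf j-\delta_i)}$ for that $i$; if $|\mathbf j|$ is odd, $X^{(\mathbf j)}=|\mathbf j|\int\frac{1}{pu_0^2}\sum_{i=1}^dX^{(\mathbf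 j-\delta_i)}$. *)

theory Defs
  imports "HOL-Analysis.Analysis"
begin

definition oint :: "real \<Rightarrow> (real \<Rightarrow> real) \<Rightarrow> real \<Rightarrow> real" where
  "oint x0 f x = (if x0 \<le> x then integral {x0..x} f else - integral {x..x0} f)"

text \<open>Sturm-Liouville operator: L_eq a b p q y f means  (p y')' + q y = f  on [a,b]
  (one-sided derivatives at the endpoints).\<close>
definition L_eq :: "real \<Rightarrow> real \<Rightarrow> (real \<Rightarrow> real) \<Rightarrow> (real \<Rightarrow> real) \<Rightarrow> (real \<Rightarrow> real)
    \<Rightarrow> (real \<Rightarrow> real) \<Rightarrow> bool" where
  "L_eq a b p q y f \<longleftrightarrow> (\<exists>y'.
      (\<forall>x\<in>{a..b}. (y has_real_derivative y' x) (at x within {a..b})) \<and>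
      (\<forall>x\<in>{a..b}. ((\<lambda>t. p t * y' t) has_real_derivative (f x - q x * y x)) (at x within {a..b})))"

text \<open>Index m :: int list of length d (0-based coordinates); j = m + (1/d) 1.\<close>
definition admissible :: "int list \<Rightarrow> bool" where
  "admissible m \<longleftrightarrow> card {i. i < length m \<and> odd (m ! i)} \<le> 1"

definition minus_delta :: "int list \<Rightarrow> nat \<Rightarrow> int list" where
  "minus_delta m i = m[i := m ! i - 1]"

lemma sum_list_update_minus1:
  "i < length m \<Longrightarrow> sum_list (m[i := m ! i - 1]) = sum_list m - (1::int)"
  by (induction m arbitrary: i) (auto split: nat.splits)

function Xf :: "real \<Rightarrow> (real \<Rightarrow> real) \<Rightarrow> (real \<Rightarrow> real) \<Rightarrow> (nat \<Rightarrow> real \<Rightarrow> real)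
    \<Rightarrow> int list \<Rightarrow> real \<Rightarrow> real" where
  "Xf x0 p u0 r m =
    (if (\<exists>i<length m. m = (replicate (length m) 0)[i := -1]) then (\<lambda>_. 1 / real (length m))
     else if (\<exists>i<length m. m ! i < 0) then (\<lambda>_. 0)
     else if \<not> admissible m then (\<lambda>_. 0)
     else if odd (sum_list m) then
       (\<lambda>x. real_of_int (sum_list m + 1) *
          (\<Sum>i<length m. if odd (m ! i) then
             oint x0 (\<lambda>s. r i s * (u0 s)\<^sup>2 * Xf x0 p u0 r (minus_delta m i) s) x else 0))
     else
       (\<lambda>x. real_of_int (sum_list m + 1) *
          oint x0 (\<lambda>s. 1 / (p s * (u0 s)\<^sup>2) * (\<Sum>i<length m. Xf x0 p u0 r (minus_delta m i) s)) x))"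
  by pat_completeness auto
termination
proof (relation "Wellfounded.measure (\<lambda>(x0, p, u0, r, m). nat (sum_list m + 1))")
  have key: "nat (sum_list (minus_delta m i) + 1) < nat (sum_list m + 1)"
    if "i < length m" "\<not> (\<exists>i<length m. m ! i < 0)" for m :: "int list" and i
  proof -
    have "sum_list (minus_delta m i) = sum_list m - 1"
      using that(1) by (simp add: minus_delta_def sum_list_update_minus1)
    moreover have "sum_list m \<ge> 0" using that(2)
      by (intro sum_list_nonneg) (metis in_set_conv_nth not_less)
    ultimately show ?thesis by simp
  qed
  show "wf (Wellfounded.measure (\<lambda>(x0, p, u0, r, m). nat (sum_list m + 1)))" by simp
  show "\<And>x0 p u0 r m x i s. \<not> (\<exists>i<length m. m = (replicate (length m) 0)[i := - 1]) \<Longrightarrow>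
       \<not> (\<exists>i<length m. m ! i < 0) \<Longrightarrow> \<not> \<not> admissible m \<Longrightarrow> odd (sum_list m) \<Longrightarrow>
       i \<in> {..<length m} \<Longrightarrow> odd (m ! i) \<Longrightarrow>
       ((x0, p, u0, r, minus_delta m i), x0, p, u0, r, m) \<in> Wellfounded.measure (\<lambda>(x0, p, u0, r, m). nat (sum_list m + 1))"
    using key by auto
  show "\<And>x0 p u0 r m x s i. \<not> (\<exists>i<length m. m = (replicate (length m) 0)[i := - 1]) \<Longrightarrow>
       \<not> (\<exists>i<length m. m ! i < 0) \<Longrightarrow> \<not> \<not> admissible m \<Longrightarrow> \<not> odd (sum_list m) \<Longrightarrow>
       i \<in> {..<length m} \<Longrightarrow>
       ((x0, p, u0, r, minus_delta m i), x0, p, u0, r, m) \<in> Wellfounded.measure (\<lambda>(x0, p, u0, r, m). nat (sum_list m + 1))"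
    using key by auto
qed

end

theory Submission
  imports Defs
begin

text \<open>Reduction of order: if \<open>L u0 = 0\<close> and \<open>u0\<close> does not vanish, then
  \<open>L (u0 X) = (p u0\<^sup>2 X')' / u0\<close>. For the even index \<open>2n\<close> the recursion says that
  \<open>p u0\<^sup>2 X' = (2|n| + 1) \<Sum>\<^sub>i X(2n - \<delta>\<^sub>i)\<close>, and the odd-index recursion differentiates each
  summand to \<open>2|n| r\<^sub>i u0\<^sup>2 X(2n - 2\<delta>\<^sub>i)\<close>. When \<open>n\<^sub>i = 0\<close> the summand is constant and
  \<open>X(2n - 2\<delta>\<^sub>i) = 0\<close>, so the formula persists.\<close>

declare Xf.simps [simp del]

lemma oint_eq_integral_diff:
  assumes "continuous_on {a..b} f" "x0 \<in> {a..b}" "x \<in> {a..b}"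
  shows "oint x0 f x = integral {a..x} f - integral {a..x0} f"
proof -
  have "integral {a..u} f + integral {u..v} f = integral {a..v} f"
    if "u \<in> {a..b}" "v \<in> {a..b}" "u \<le> v" for u v
    using that by (intro Henstock_Kurzweil_Integration.integral_combine)
      (auto intro!: integrable_continuous_interval continuous_on_subset[OF assms(1)])
  from this[of x0 x] this[of x x0] show ?thesis
    using assms(2,3) by (auto simp: oint_def algebra_simps)
qed

lemma oint_has_real_derivative:
  assumes "continuous_on {a..b} f" "x0 \<in> {a..b}" "x \<in> {a..b}"
  shows "(oint x0 f has_real_derivative f x) (at x within {a..b})"
proof -
  have "((\<lambda>u. integral {a..u} f - integral {a..x0} f) has_real_derivative f x) (at x within {a..b})"
    using integral_has_real_derivative[OF assms(1,3)] by (auto intro!: derivative_eq_intros)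
  then show ?thesis
    unfolding has_field_derivative_def
    by (rule has_derivative_transform[rotated 2]) (use assms in \<open>auto simp: oint_eq_integral_diff\<close>)
qed

lemma continuous_on_oint:
  "continuous_on {a..b} f \<Longrightarrow> x0 \<in> {a..b} \<Longrightarrow> continuous_on {a..b} (oint x0 f)"
  by (rule DERIV_continuous_on, rule oint_has_real_derivative)

lemma length_minus_delta [simp]: "length (minus_delta m i) = length m"
  by (simp add: minus_delta_def)

lemma continuous_on_Xf:
  assumes "continuous_on {a..b} p" "continuous_on {a..b} u0"
    "\<forall>x\<in>{a..b}. p x \<noteq> 0" "\<forall>x\<in>{a..b}. u0 x \<noteq> 0" "x0 \<in> {a..b}"
    "\<forall>i<length m. continuous_on {a..b} (r i)"
  shows "continuous_on {a..b} (Xf x0 p u0 r m)"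
  using assms
proof (induction x0 p u0 r m rule: Xf.induct)
  case (1 x0 p u0 r m)
  have if_const: "continuous_on {a..b} (\<lambda>x. if c then f x else 0)"
    if "c \<Longrightarrow> continuous_on {a..b} f" for c and f :: "real \<Rightarrow> real"
    using that by (cases c) auto
  show ?case
    using 1 by (subst Xf.simps) (auto intro!: continuous_intros continuous_on_oint if_const)
qed

lemma L_eq_continuous_on: "L_eq a b p q y f \<Longrightarrow> continuous_on {a..b} y"
  unfolding L_eq_def by (auto intro: DERIV_continuous_on)

lemma L_eq_mult_solution:
  assumes L0: "L_eq a b p q u0 (\<lambda>_. 0)"
    and p_nz: "\<forall>x\<in>{a..b}. p x \<noteq> 0" and u0_nz: "\<forall>x\<in>{a..b}. u0 x \<noteq> 0"
    and dX: "\<And>x. x \<in> {a..b} \<Longrightarrow> (X has_real_derivative W x / (p x * (u0 x)\<^sup>2)) (at x within {a..b})"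
    and dW: "\<And>x. x \<in> {a..b} \<Longrightarrow> (W has_real_derivative u0 x * f x) (at x within {a..b})"
  shows "L_eq a b p q (\<lambda>x. u0 x * X x) f"
proof -
  let ?I = "{a..b}"
  obtain u0' where du0: "\<And>x. x \<in> ?I \<Longrightarrow> (u0 has_real_derivative u0' x) (at x within ?I)"
    and dpu0: "\<And>x. x \<in> ?I \<Longrightarrow> ((\<lambda>t. p t * u0' t) has_real_derivative 0 - q x * u0 x) (at x within ?I)"
    using L0 unfolding L_eq_def by blast
  define y' where "y' x = u0' x * X x + W x / (p x * u0 x)" for x
  have "((\<lambda>x. u0 x * X x) has_real_derivative y' x) (at x within ?I)" if x: "x \<in> ?I" for x
    by (rule DERIV_cong[OF DERIV_mult[OF du0[OF x] dX[OF x]]])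
      (use p_nz u0_nz x in \<open>auto simp: y'_def field_simps power2_eq_square\<close>)
  moreover have "((\<lambda>t. p t * y' t) has_real_derivative f x - q x * (u0 x * X x)) (at x within ?I)"
    if x: "x \<in> ?I" for x
  proof -
    \<comment> \<open>\<open>p (u0 X)' = (p u0') X + W / u0\<close>, and the terms containing \<open>u0'\<close> cancel after differentiation\<close>
    have "((\<lambda>t. p t * u0' t * X t + W t / u0 t) has_real_derivative
        (0 - q x * u0 x) * X x + W x / (p x * (u0 x)\<^sup>2) * (p x * u0' x)
        + (u0 x * f x * u0 x - W x * u0' x) / (u0 x * u0 x)) (at x within ?I)"
      by (rule DERIV_add[OF DERIV_mult[OF dpu0[OF x] dX[OF x]] DERIV_divide[OF dW[OF x] du0[OF x]]])
        (use u0_nz x in auto)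
    also have "(0 - q x * u0 x) * X x + W x / (p x * (u0 x)\<^sup>2) * (p x * u0' x)
        + (u0 x * f x * u0 x - W x * u0' x) / (u0 x * u0 x) = f x - q x * (u0 x * X x)"
      using p_nz u0_nz x by (auto simp: field_simps power2_eq_square)
    finally show ?thesis
      unfolding has_field_derivative_def
      by (rule has_derivative_transform[rotated 2])
        (use x p_nz in \<open>auto simp: y'_def field_simps\<close>)
  qed
  ultimately show ?thesis
    unfolding L_eq_def by blast
qed

lemma nonneg_ne_neg_unit:
  fixes m :: "int list"
  assumes "\<forall>k<length m. 0 \<le> m ! k" "i < length m"
  shows "m \<noteq> (replicate (length m) 0)[i := -1]"
proof
  assume "m = (replicate (length m) 0)[i := -1]"
  then have "m ! i = -1"
    using assms(2) by (metis length_replicate nth_list_update_eq)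
  moreover have "0 \<le> m ! i"
    using assms by blast
  ultimately show False
    by simp
qed

lemma Xf_nonneg_even:
  assumes "\<forall>i<length m. 0 \<le> m ! i" "admissible m" "even (sum_list m)"
  shows "Xf x0 p u0 r m = (\<lambda>x. of_int (sum_list m + 1) *
    oint x0 (\<lambda>s. 1 / (p s * (u0 s)\<^sup>2) * (\<Sum>i<length m. Xf x0 p u0 r (minus_delta m i) s)) x)"
  using assms nonneg_ne_neg_unit[OF assms(1)] by (subst Xf.simps) (auto simp: not_less)

lemma Xf_single_odd:
  assumes nonneg: "\<forall>k<length m. 0 \<le> m ! k" and i: "i < length m"
    and odd_iff: "\<And>k. k < length m \<Longrightarrow> odd (m ! k) \<longleftrightarrow> k = i"
  shows "Xf x0 p u0 r m = (\<lambda>x. of_int (sum_list m + 1) *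
    oint x0 (\<lambda>s. r i s * (u0 s)\<^sup>2 * Xf x0 p u0 r (minus_delta m i) s) x)"
proof -
  have odd_set: "{k. k < length m \<and> odd (m ! k)} = {i}"
    using odd_iff i by auto
  have "odd (sum_list m)"
    using odd_set by (simp add: sum_list_sum_nth even_sum_iff lessThan_def)
  moreover have "(\<Sum>k<length m. if odd (m ! k) then g k else 0) = g i" for g :: "nat \<Rightarrow> real"
    using i odd_iff by (simp add: sum.If_cases lessThan_def Collect_conj_eq[symmetric] odd_set)
  ultimately show ?thesis
    using nonneg odd_set nonneg_ne_neg_unit[OF nonneg]
    by (subst Xf.simps) (auto simp: not_less admissible_def)
qed

lemma Xf_negative_entry_const:
  assumes "i < length m" "m ! i < 0"
  shows "\<exists>c. Xf x0 p u0 r m = (\<lambda>_. c)"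
  using assms by (subst Xf.simps) auto

lemma Xf_below_minus_one:
  assumes "i < length m" "m ! i < -1"
  shows "Xf x0 p u0 r m = (\<lambda>_. 0)"
proof -
  have "(replicate (length m) (0::int))[k := -1] ! i \<in> {0, -1}" for k
    using assms(1) by (cases "k = i") auto
  moreover have "m ! i \<notin> {0, -1}"
    using assms(2) by auto
  ultimately have "m \<noteq> (replicate (length m) 0)[k := -1]" for k
    by metis
  then show ?thesis
    using assms by (subst Xf.simps) auto
qed

lemma sum_list_double: "sum_list (map (\<lambda>k. 2 * int k) n) = 2 * int (sum_list n)"
  by (induction n) auto

lemma Xf_double:
  "Xf x0 p u0 r (map (\<lambda>k. 2 * int k) n) = (\<lambda>x. real (2 * sum_list n + 1) *
    oint x0 (\<lambda>s. (\<Sum>i<length n. Xf x0 p u0 r (minus_delta (map (\<lambda>k. 2 * int k) n) i) s)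
      / (p s * (u0 s)\<^sup>2)) x)"
proof -
  let ?m = "map (\<lambda>k. 2 * int k) n"
  have no_odd: "{i. i < length ?m \<and> odd (?m ! i)} = {}"
    by auto
  have "admissible ?m"
    unfolding admissible_def no_odd by simp
  moreover have "even (sum_list ?m)" "\<forall>i<length ?m. 0 \<le> ?m ! i"
    by (simp_all add: sum_list_double)
  ultimately show ?thesis
    by (simp add: Xf_nonneg_even sum_list_double add.commute)
qed

lemma Xf_double_minus_delta_has_derivative:
  fixes n :: "nat list"
  defines "m \<equiv> map (\<lambda>k. 2 * int k) n"
  assumes "continuous_on {a..b} p" "continuous_on {a..b} u0"
    "\<forall>x\<in>{a..b}. p x \<noteq> 0" "\<forall>x\<in>{a..b}. u0 x \<noteq> 0" "x0 \<in> {a..b}"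
    "\<forall>k<length n. continuous_on {a..b} (r k)"
    and i: "i < length n" and x: "x \<in> {a..b}"
  shows "(Xf x0 p u0 r (minus_delta m i) has_real_derivative
      real (2 * sum_list n) * (r i x * (u0 x)\<^sup>2 * Xf x0 p u0 r (m[i := 2 * int (n ! i) - 2]) x))
      (at x within {a..b})"
proof (cases "n ! i = 0")
  case True
  have "minus_delta m i ! i < 0"
    using i True by (simp add: m_def minus_delta_def)
  then obtain c where "Xf x0 p u0 r (minus_delta m i) = (\<lambda>_. c)"
    using Xf_negative_entry_const[of i "minus_delta m i"] i by (auto simp: m_def) blast
  moreover have "Xf x0 p u0 r (m[i := 2 * int (n ! i) - 2]) = (\<lambda>_. 0)"
    using i True by (intro Xf_below_minus_one[of i]) (auto simp: m_def)
  ultimately show ?thesis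
    by simp
next
  case False
  let ?md = "minus_delta m i" and ?m' = "m[i := 2 * int (n ! i) - 2]"
  have md: "?md = m[i := 2 * int (n ! i) - 1]"
    using i by (simp add: m_def minus_delta_def)
  have "sum_list ?md = sum_list m - 1"
    unfolding minus_delta_def by (rule sum_list_update_minus1) (simp add: m_def i)
  then have sum_md: "of_int (sum_list ?md + 1) = real (2 * sum_list n)"
    by (simp add: m_def sum_list_double)
  have delta_md: "minus_delta ?md i = ?m'"
    using i by (simp add: md minus_delta_def m_def)
  have "\<forall>k<length ?md. 0 \<le> ?md ! k" "i < length ?md"
    "\<And>k. k < length ?md \<Longrightarrow> odd (?md ! k) \<longleftrightarrow> k = i"
    using i False unfolding md by (auto simp: m_def nth_list_update)
  from Xf_single_odd[OF this, of x0 p u0 r]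
  have Xmd: "Xf x0 p u0 r ?md =
      (\<lambda>x. real (2 * sum_list n) * oint x0 (\<lambda>s. r i s * (u0 s)\<^sup>2 * Xf x0 p u0 r ?m' s) x)"
    unfolding sum_md delta_md .
  have "continuous_on {a..b} (\<lambda>s. r i s * (u0 s)\<^sup>2 * Xf x0 p u0 r ?m' s)"
    using assms i by (auto intro!: continuous_intros continuous_on_Xf simp: m_def)
  then show ?thesis
    unfolding Xmd by (rule DERIV_cmult[OF oint_has_real_derivative[OF _ \<open>x0 \<in> {a..b}\<close> x]])
qed

theorem mainTheorem3:
  fixes x1 x2 x0 :: real and p q u0 :: "real \<Rightarrow> real" and r :: "nat \<Rightarrow> real \<Rightarrow> real"
    and n :: "nat list"
  assumes "length n \<ge> 1" and "x1 < x2" and "x0 \<in> {x1..x2}"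
    and "continuous_on {x1..x2} p" and "continuous_on {x1..x2} q"
    and "\<forall>i<length n. continuous_on {x1..x2} (r i)"
    and "\<forall>x\<in>{x1..x2}. p x \<noteq> 0"
    and "\<forall>x\<in>{x1..x2}. u0 x \<noteq> 0"
    and "L_eq x1 x2 p q u0 (\<lambda>_. 0)"
  shows "L_eq x1 x2 p q
           (\<lambda>x. u0 x * Xf x0 p u0 r (map (\<lambda>k. 2 * int k) n) x)
           (\<lambda>x. real (2 * sum_list n + 1) * real (2 * sum_list n) * u0 x *
                (\<Sum>i<length n. r i x *
                   Xf x0 p u0 r ((map (\<lambda>k. 2 * int k) n)[i := 2 * int (n ! i) - 2]) x))"
proof -
  define m where "m = map (\<lambda>k. 2 * int k) n"
  define c where "c = real (2 * sum_list n + 1)"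
  define S where "S s = (\<Sum>i<length n. Xf x0 p u0 r (minus_delta m i) s)" for s
  have u0_cont: "continuous_on {x1..x2} u0"
    using assms(9) by (rule L_eq_continuous_on)
  have S_cont: "continuous_on {x1..x2} (\<lambda>s. S s / (p s * (u0 s)\<^sup>2))"
    using assms u0_cont unfolding S_def
    by (auto intro!: continuous_intros continuous_on_Xf simp: m_def)
  show ?thesis
    unfolding m_def[symmetric] c_def[symmetric]
  proof (rule L_eq_mult_solution[OF assms(9,7,8), where W = "\<lambda>x. c * S x"])
    show "(Xf x0 p u0 r m has_real_derivative c * S x / (p x * (u0 x)\<^sup>2)) (at x within {x1..x2})"
      if "x \<in> {x1..x2}" for x
      using DERIV_cmult[OF oint_has_real_derivative[OF S_cont assms(3) that], where c = c]
      by (simp add: Xf_double m_def c_def S_def)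
    show "((\<lambda>x. c * S x) has_real_derivative u0 x * (c * real (2 * sum_list n) * u0 x *
        (\<Sum>i<length n. r i x * Xf x0 p u0 r (m[i := 2 * int (n ! i) - 2]) x))) (at x within {x1..x2})"
      if "x \<in> {x1..x2}" for x
    proof -
      have "((\<lambda>x. c * S x) has_real_derivative c * (\<Sum>i<length n. real (2 * sum_list n) *
          (r i x * (u0 x)\<^sup>2 * Xf x0 p u0 r (m[i := 2 * int (n ! i) - 2]) x))) (at x within {x1..x2})"
        unfolding S_def m_def using that
        by (intro DERIV_cmult DERIV_sum
            Xf_double_minus_delta_has_derivative[OF assms(4) u0_cont assms(7,8,3,6)]) auto
      then show ?thesis
        by (rule DERIV_cong) (simp add: sum_distrib_left power2_eq_square mult_ac)
    qed
  qed
qed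

end
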